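(* Let $n\ge2$ and $|\psi\rangle_{ABS}\in\mathbb{C}^2\otimes\mathbb{C}^2\otimes\mathbb{C}^n$ be a normalized pure state belonging to the class $\mathcal{A}$ defined below. Let $\mathcal{P}_m$ be the maximum probability of obtaining a two-qubit maximally entangled (Bell) state shared by Alice and Bob by a protocol in which Sapna first performs a generalized measurement and communicates the outcome to Alice and Bob, who then perform LOCC between themselves; equivalently $\mathcal{P}_m=\max\sum_i p_i E_2(|\psi_i\rangle)$ over all pure-state decompositions $\rho_{AB}=\mathrm{Tr}_S|\psi\rangle\langle\psi|=\sum_i p_i|\psi_i\rangle\langle\psi_i|$. Then $$\mathcal{P}_m=\min\{E_{A(BS)},E_{B(AS)}\}.$$
   Context: For a normalized two-qubit pure state $|\phi\rangle$, $E_2(|\phi\rangle)=2\lambda_{\min}(\phi)$ where $\lambda_{\min}$ is the smaller of its two Schmidt coefficients (squared Schmidt numbers summing to 1, possibly zero). Write $\rho_A=\mathrm{Tr}_{BS}|\psi\rangle\langle\psi|$ with eigenvalues $p_0\ge p_1$ and $\rho_B=\mathrm{Tr}_{AS}|\psi\rangle\langle\psi|$ with eigenvalues $q_0\ge q_1$; set $E_{A(BS)}=2p_1$ and $E_{B(AS)}=2q_1$. For orthonormal bases $\{|i\rangle_A\}$, $\{|j\rangle_B\}$, $\{|l\rangle_S\}_{l=1}^n$, let $A^l$ be the $2\times2$ matrix with entries $(A^l)_{ij}={}_A\langle i|{}_B\langle j|{}_S\langle l|\psi\rangle$. The state belongs to class $\mathcal{A}$ if either (i) $E_{A(BS)}\ge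 E_{B(AS)}$ and there exist orthonormal bases for which $A^{l\dagger}A^l=\mathrm{diag}(q_0^l,q_1^l)$ for all $l$ with $q_0^l\ge q_1^l$ for all $l$, where $\sum_l q_0^l=q_0$ and $\sum_l q_1^l=q_1$; or (i') $E_{A(BS)}\le E_{B(AS)}$ and there exist orthonormal bases for which $A^lA^{l\dagger}=\mathrm{diag}(p_0^l,p_1^l)$ for all $l$ with $p_0^l\ge p_1^l$ for all $l$, where $\sum_l p_0^l=p_0$ and $\sum_l p_1^l=p_1$. *)

theory Defs
  imports "HOL-Analysis.Analysis" "HOL-Library.Numeral_Type"
begin

text \<open>A state of ABS in C^2 (x) C^2 (x) C^n is a function
  psi :: 2 => 2 => 'n => complex (coefficients in the computational basis),
  where 'n is a finite type with CARD('n) = n. A two-qubit state is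
  phi :: 2 => 2 => complex. An orthonormal basis of C^m indexed by type 'm is
  a function e :: 'm => 'm => complex, where e k is the k-th basis vector.\<close>

definition orthonormal_basis :: "('m::finite \<Rightarrow> 'm \<Rightarrow> complex) \<Rightarrow> bool" where
  "orthonormal_basis e \<longleftrightarrow>
     (\<forall>k k'. (\<Sum>c\<in>UNIV. cnj (e k c) * e k' c) = (if k = k' then 1 else 0))"

definition normalized3 :: "(2 \<Rightarrow> 2 \<Rightarrow> 'n::finite \<Rightarrow> complex) \<Rightarrow> bool" where
  "normalized3 psi \<longleftrightarrow> (\<Sum>a\<in>UNIV. \<Sum>b\<in>UNIV. \<Sum>c\<in>UNIV. (cmod (psi a b c))\<^sup>2) = 1"

definition normalized2 :: "(2 \<Rightarrow> 2 \<Rightarrow> complex) \<Rightarrow> bool" where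
  "normalized2 phi \<longleftrightarrow> (\<Sum>a\<in>UNIV. \<Sum>b\<in>UNIV. (cmod (phi a b))\<^sup>2) = 1"

text \<open>Schmidt decomposition phi = sum_k sqrt(l k) |a_k> |b_k>, with l k the
  squared Schmidt numbers; lambda_min is the smaller one.\<close>

definition schmidt_decomp :: "(2 \<Rightarrow> 2 \<Rightarrow> complex) \<Rightarrow> (2 \<Rightarrow> real) \<Rightarrow> bool" where
  "schmidt_decomp phi l \<longleftrightarrow> (\<forall>k. l k \<ge> 0) \<and>
     (\<exists>a b :: 2 \<Rightarrow> 2 \<Rightarrow> complex. orthonormal_basis a \<and> orthonormal_basis b \<and>
        (\<forall>i j. phi i j = (\<Sum>k\<in>UNIV. complex_of_real (sqrt (l k)) * a k i * b k j)))"

definition lambda_min :: "(2 \<Rightarrow> 2 \<Rightarrow> complex) \<Rightarrow> real" where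
  "lambda_min phi = Inf {min (l 0) (l 1) | l. schmidt_decomp phi l}"

definition E2 :: "(2 \<Rightarrow> 2 \<Rightarrow> complex) \<Rightarrow> real" where
  "E2 phi = 2 * lambda_min phi"

definition rhoA :: "(2 \<Rightarrow> 2 \<Rightarrow> 'n::finite \<Rightarrow> complex) \<Rightarrow> 2 \<Rightarrow> 2 \<Rightarrow> complex" where
  "rhoA psi i i' = (\<Sum>j\<in>UNIV. \<Sum>l\<in>UNIV. psi i j l * cnj (psi i' j l))"

definition rhoB :: "(2 \<Rightarrow> 2 \<Rightarrow> 'n::finite \<Rightarrow> complex) \<Rightarrow> 2 \<Rightarrow> 2 \<Rightarrow> complex" where
  "rhoB psi j j' = (\<Sum>i\<in>UNIV. \<Sum>l\<in>UNIV. psi i j l * cnj (psi i j' l))"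

definition rhoAB :: "(2 \<Rightarrow> 2 \<Rightarrow> 'n::finite \<Rightarrow> complex) \<Rightarrow> (2 \<times> 2) \<Rightarrow> (2 \<times> 2) \<Rightarrow> complex" where
  "rhoAB psi x y = (\<Sum>l\<in>UNIV. psi (fst x) (snd x) l * cnj (psi (fst y) (snd y) l))"

definition eigvals2 :: "(2 \<Rightarrow> 2 \<Rightarrow> complex) \<Rightarrow> real set" where
  "eigvals2 M = {x. \<exists>v :: 2 \<Rightarrow> complex. v \<noteq> (\<lambda>_. 0) \<and>
                      (\<forall>i. (\<Sum>j\<in>UNIV. M i j * v j) = complex_of_real x * v i)}"

definition eig_max :: "(2 \<Rightarrow> 2 \<Rightarrow> complex) \<Rightarrow> real" where
  "eig_max M = Sup (eigvals2 M)"

definition eig_min :: "(2 \<Rightarrow> 2 \<Rightarrow> complex) \<Rightarrow> real" where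
  "eig_min M = Inf (eigvals2 M)"

definition E_A_BS :: "(2 \<Rightarrow> 2 \<Rightarrow> 'n::finite \<Rightarrow> complex) \<Rightarrow> real" where
  "E_A_BS psi = 2 * eig_min (rhoA psi)"

definition E_B_AS :: "(2 \<Rightarrow> 2 \<Rightarrow> 'n::finite \<Rightarrow> complex) \<Rightarrow> real" where
  "E_B_AS psi = 2 * eig_min (rhoB psi)"

text \<open>The matrices A^l with respect to orthonormal bases eA, eB, eS:
  (A^l)_{ij} = <i|_A <j|_B <l|_S psi.\<close>

definition Amat :: "(2 \<Rightarrow> 2 \<Rightarrow> 'n::finite \<Rightarrow> complex) \<Rightarrow> (2 \<Rightarrow> 2 \<Rightarrow> complex) \<Rightarrow>
    (2 \<Rightarrow> 2 \<Rightarrow> complex) \<Rightarrow> ('n \<Rightarrow> 'n \<Rightarrow> complex) \<Rightarrow> 'n \<Rightarrow> 2 \<Rightarrow> 2 \<Rightarrow> complex" where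
  "Amat psi eA eB eS l i j =
     (\<Sum>a\<in>UNIV. \<Sum>b\<in>UNIV. \<Sum>c\<in>UNIV. cnj (eA i a) * cnj (eB j b) * cnj (eS l c) * psi a b c)"

definition class_A :: "(2 \<Rightarrow> 2 \<Rightarrow> 'n::finite \<Rightarrow> complex) \<Rightarrow> bool" where
  "class_A psi \<longleftrightarrow>
    (E_A_BS psi \<ge> E_B_AS psi \<and>
      (\<exists>eA eB eS (q :: 2 \<Rightarrow> 'n \<Rightarrow> real).
         orthonormal_basis eA \<and> orthonormal_basis eB \<and> orthonormal_basis eS \<and>
         (\<forall>l j j'. (\<Sum>i\<in>UNIV. cnj (Amat psi eA eB eS l i j) * Amat psi eA eB eS l i j')
                    = (if j = j' then complex_of_real (q j l) else 0)) \<and>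
         (\<forall>l. q 0 l \<ge> q 1 l) \<and>
         (\<Sum>l\<in>UNIV. q 0 l) = eig_max (rhoB psi) \<and>
         (\<Sum>l\<in>UNIV. q 1 l) = eig_min (rhoB psi)))
    \<or>
    (E_A_BS psi \<le> E_B_AS psi \<and>
      (\<exists>eA eB eS (p :: 2 \<Rightarrow> 'n \<Rightarrow> real).
         orthonormal_basis eA \<and> orthonormal_basis eB \<and> orthonormal_basis eS \<and>
         (\<forall>l i i'. (\<Sum>j\<in>UNIV. Amat psi eA eB eS l i j * cnj (Amat psi eA eB eS l i' j))
                    = (if i = i' then complex_of_real (p i l) else 0)) \<and>
         (\<forall>l. p 0 l \<ge> p 1 l) \<and>
         (\<Sum>l\<in>UNIV. p 0 l) = eig_max (rhoA psi) \<and>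
         (\<Sum>l\<in>UNIV. p 1 l) = eig_min (rhoA psi)))"

definition pure_decomp :: "(2 \<Rightarrow> 2 \<Rightarrow> 'n::finite \<Rightarrow> complex) \<Rightarrow> nat \<Rightarrow> (nat \<Rightarrow> real) \<Rightarrow>
    (nat \<Rightarrow> 2 \<Rightarrow> 2 \<Rightarrow> complex) \<Rightarrow> bool" where
  "pure_decomp psi K p phi \<longleftrightarrow>
     (\<forall>k<K. p k \<ge> 0 \<and> normalized2 (phi k)) \<and> (\<Sum>k<K. p k) = 1 \<and>
     (\<forall>x y. rhoAB psi x y =
        (\<Sum>k<K. complex_of_real (p k) * phi k (fst x) (snd x) * cnj (phi k (fst y) (snd y))))"

definition decomp_values :: "(2 \<Rightarrow> 2 \<Rightarrow> 'n::finite \<Rightarrow> complex) \<Rightarrow> real set" where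
  "decomp_values psi = {(\<Sum>k<K. p k * E2 (phi k)) | K p phi. pure_decomp psi K p phi}"

text \<open>P_m is the maximum of decomp_values.\<close>

end

theory Submission
  imports Defs
begin

text \<open>
  The smaller squared Schmidt coefficient of a two-qubit state is an explicit function of the
  squared norm and of the modulus of the determinant of its coefficient matrix; it is the smaller
  eigenvalue of either reduced density matrix, and it is invariant under local unitaries.
  The smallest eigenvalue of a Hermitian 2x2 matrix is the minimum of its Rayleigh quotient,
  hence concave, and for every pure-state decomposition rho_AB = sum_k p_k |phi_k><phi_k| the
  matrix rho_A is the p_k-weighted sum of the reduced matrices of the phi_k. Therefore
  sum_k p_k E2(phi_k) <= E_A(BS), and likewise <= E_B(AS).
  Conversely, measuring S in the basis of the class-A condition leaves AB in the unnormalised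
  states <l|_S psi, whose coefficient matrices in the product bases are the A^l. Their Gram
  matrices are diagonal, so the branch l contributes q_1^l (resp. p_1^l) to sum_k p_k E2(phi_k)/2,
  and these contributions add up to the smaller eigenvalue of rho_B (resp. rho_A), which is the
  minimum in that case.
\<close>

lemma exhaust_two: "(i::2) = 0 \<or> i = 1"
proof -
  have "(2::2) = 0" by simp
  with exhaust_2[of i] show ?thesis by auto
qed

lemma UNIV_two: "(UNIV :: 2 set) = {0, 1}"
  using exhaust_two by auto

lemma sum_UNIV_two: "(\<Sum>i\<in>UNIV. f i) = f 0 + f (1::2)"
  unfolding UNIV_two by simp

lemma all_two: "(\<forall>i::2. P i) \<longleftrightarrow> P 0 \<and> P 1"
  using exhaust_two by metis

section \<open>Vectors and orthonormal bases\<close>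

definition sqnorm :: "('m::finite \<Rightarrow> complex) \<Rightarrow> real" where
  "sqnorm v = (\<Sum>i\<in>UNIV. (cmod (v i))\<^sup>2)"

definition cinner :: "('m::finite \<Rightarrow> complex) \<Rightarrow> ('m \<Rightarrow> complex) \<Rightarrow> complex" where
  "cinner u v = (\<Sum>i\<in>UNIV. cnj (u i) * v i)"

lemma orthonormal_basis_cinner:
  "orthonormal_basis e \<longleftrightarrow> (\<forall>k k'. cinner (e k) (e k') = (if k = k' then 1 else 0))"
  unfolding orthonormal_basis_def cinner_def ..

lemma cinner_self: "cinner v v = of_real (sqnorm v)"
  unfolding cinner_def sqnorm_def of_real_sum complex_norm_square by (simp add: mult.commute)

lemma cinner_commute: "cinner v u = cnj (cinner u v)"
  unfolding cinner_def by (simp add: mult.commute)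

lemma cinner_sum_right: "cinner u (\<lambda>i. \<Sum>k\<in>A. w k i) = (\<Sum>k\<in>A. cinner u (w k))"
  unfolding cinner_def by (simp add: sum_distrib_left) (rule sum.swap)

lemma cinner_scale_right: "cinner u (\<lambda>i. c * w i) = c * cinner u w"
  unfolding cinner_def by (simp add: sum_distrib_left mult_ac)

lemma sqnorm_nonneg: "sqnorm v \<ge> 0"
  unfolding sqnorm_def by (simp add: sum_nonneg)

lemma sqnorm_pos:
  assumes "v \<noteq> (\<lambda>_. 0)"
  shows "sqnorm v > 0"
proof -
  obtain i where "v i \<noteq> 0" using assms by auto
  hence "(cmod (v i))\<^sup>2 > 0" by simp
  also have "(cmod (v i))\<^sup>2 \<le> sqnorm v"
    unfolding sqnorm_def by (rule member_le_sum) auto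
  finally show ?thesis .
qed

lemma exists_unit_multiple:
  fixes v :: "'m::finite \<Rightarrow> complex"
  obtains w where "sqnorm w = 1" "\<And>i. v i = of_real (sqrt (sqnorm v)) * w i"
proof (cases "v = (\<lambda>_. 0)")
  case True
  define w :: "'m \<Rightarrow> complex" where "w i = (if i = undefined then 1 else 0)" for i
  have "(cmod (w i))\<^sup>2 = (if i = undefined then 1 else 0)" for i
    by (simp add: w_def)
  hence "sqnorm w = 1"
    unfolding sqnorm_def by simp
  moreover have "v i = of_real (sqrt (sqnorm v)) * w i" for i
    using True by (simp add: sqnorm_def)
  ultimately show ?thesis using that by blast
next
  case False
  have pos: "sqnorm v > 0" using False by (rule sqnorm_pos)
  define w where "w i = v i / of_real (sqrt (sqnorm v))" for i
  have "sqnorm w = sqnorm v / (sqrt (sqnorm v))\<^sup>2"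
    unfolding sqnorm_def w_def by (simp add: norm_divide power_divide sum_divide_distrib)
  hence "sqnorm w = 1" using pos by simp
  moreover have "v i = of_real (sqrt (sqnorm v)) * w i" for i
    using pos by (simp add: w_def)
  ultimately show ?thesis using that by blast
qed

lemma orthonormal_basis_complete:
  fixes e :: "'m::finite \<Rightarrow> 'm \<Rightarrow> complex"
  assumes "orthonormal_basis e"
  shows "(\<Sum>k\<in>UNIV. cnj (e k c) * e k c') = (if c = c' then 1 else 0)"
proof -
  define P :: "complex^'m^'m" where "P = (\<chi> k c. cnj (e k c))"
  define Q :: "complex^'m^'m" where "Q = (\<chi> c k. e k c)"
  have "P ** Q = mat 1"
    using assms unfolding orthonormal_basis_def
    by (simp add: P_def Q_def matrix_matrix_mult_def mat_def vec_eq_iff)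
  hence "Q ** P = mat 1" using matrix_left_right_inverse by blast
  hence "(Q ** P) $ c' $ c = mat 1 $ c' $ c" by simp
  thus ?thesis by (simp add: P_def Q_def matrix_matrix_mult_def mat_def mult.commute)
qed

lemma orthonormal_basis_parseval:
  assumes "orthonormal_basis e"
  shows "(\<Sum>l\<in>UNIV. cinner (e l) u * cnj (cinner (e l) v)) = (\<Sum>c\<in>UNIV. u c * cnj (v c))"
proof -
  have "(\<Sum>l\<in>UNIV. cinner (e l) u * cnj (cinner (e l) v))
      = (\<Sum>l\<in>UNIV. \<Sum>c\<in>UNIV. \<Sum>c'\<in>UNIV. (cnj (e l c) * e l c') * (u c * cnj (v c')))"
    unfolding cinner_def by (simp add: sum_product cnj_sum mult_ac)
  also have "\<dots> = (\<Sum>c\<in>UNIV. \<Sum>c'\<in>UNIV. (\<Sum>l\<in>UNIV. cnj (e l c) * e l c') * (u c * cnj (v c')))"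
    unfolding sum_distrib_right by (rule trans[OF sum.swap], rule sum.cong[OF refl], rule sum.swap)
  also have "\<dots> = (\<Sum>c\<in>UNIV. \<Sum>c'\<in>UNIV. if c = c' then u c * cnj (v c') else 0)"
    unfolding orthonormal_basis_complete[OF assms] by (intro sum.cong) simp_all
  also have "\<dots> = (\<Sum>c\<in>UNIV. u c * cnj (v c))"
    by simp
  finally show ?thesis .
qed

lemma orthonormal_basis_sqnorm:
  assumes "orthonormal_basis e"
  shows "sqnorm (\<lambda>l. cinner (e l) u) = sqnorm u"
proof -
  have "of_real (sqnorm (\<lambda>l. cinner (e l) u)) = (\<Sum>l\<in>UNIV. cinner (e l) u * cnj (cinner (e l) u))"
    unfolding sqnorm_def of_real_sum complex_norm_square ..
  also have "\<dots> = of_real (sqnorm u)"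
    unfolding orthonormal_basis_parseval[OF assms] sqnorm_def of_real_sum complex_norm_square ..
  finally show ?thesis by (rule of_real_eq_iff[THEN iffD1])
qed

lemma orthonormal_basis_conj:
  assumes "orthonormal_basis e"
  shows "orthonormal_basis (\<lambda>k c. cnj (e k c))"
proof -
  have "(\<Sum>c\<in>UNIV. cnj (cnj (e k c)) * cnj (e k' c)) = cnj (cinner (e k) (e k'))" for k k'
    unfolding cinner_def cnj_sum by (simp add: mult.commute)
  also have "cnj (cinner (e k) (e k')) = (if k = k' then 1 else 0)" for k k'
    using assms unfolding orthonormal_basis_cinner by simp
  finally show ?thesis unfolding orthonormal_basis_def by blast
qed

definition perp :: "(2 \<Rightarrow> complex) \<Rightarrow> 2 \<Rightarrow> complex" where
  "perp x i = (if i = 0 then - cnj (x 1) else cnj (x 0))"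

lemma sqnorm_perp: "sqnorm (perp x) = sqnorm x"
  unfolding perp_def sqnorm_def sum_UNIV_two by simp

lemma cinner_perp: "cinner x (perp x) = 0"
  unfolding perp_def cinner_def sum_UNIV_two by (simp add: algebra_simps)

lemma orthonormal_basis_twoI:
  fixes e :: "2 \<Rightarrow> 2 \<Rightarrow> complex"
  assumes "sqnorm (e 0) = 1" "sqnorm (e 1) = 1" "cinner (e 0) (e 1) = 0"
  shows "orthonormal_basis e"
proof -
  have "cinner (e 1) (e 0) = 0" using assms(3) cinner_commute[of "e 1" "e 0"] by simp
  then show ?thesis
    unfolding orthonormal_basis_cinner
  proof (intro allI)
    fix k k' :: 2
    show "cinner (e k) (e k') = (if k = k' then 1 else 0)"
      using exhaust_two[of k] exhaust_two[of k'] assms \<open>cinner (e 1) (e 0) = 0\<close>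
      by (auto simp: cinner_self)
  qed
qed

lemma orthonormal_basis_perp:
  "sqnorm x = 1 \<Longrightarrow> orthonormal_basis (\<lambda>k. if k = 0 then x else perp x)"
  by (rule orthonormal_basis_twoI) (simp_all add: sqnorm_perp cinner_perp)

lemma orthogonal_pair_scaled_basis:
  fixes u :: "2 \<Rightarrow> 2 \<Rightarrow> complex"
  assumes "cinner (u 0) (u 1) = 0"
  obtains x where "orthonormal_basis x" "\<And>k i. u k i = of_real (sqrt (sqnorm (u k))) * x k i"
proof -
  define s where "s k = sqrt (sqnorm (u k))" for k
  have "\<forall>k. \<exists>w. sqnorm w = 1 \<and> (\<forall>i. u k i = of_real (s k) * w i)"
    unfolding s_def by (metis exists_unit_multiple)
  then obtain w where w: "\<And>k. sqnorm (w k) = 1" "\<And>k i. u k i = of_real (s k) * w k i"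
    by metis
  consider "s 1 = 0" | "s 0 = 0" | "s 0 \<noteq> 0" "s 1 \<noteq> 0" by blast
  then obtain x where "orthonormal_basis x" "\<And>k i. u k i = of_real (s k) * x k i"
  proof cases
    case 1
    define x :: "2 \<Rightarrow> 2 \<Rightarrow> complex" where "x k = (if k = 0 then w 0 else perp (w 0))" for k
    have "orthonormal_basis x"
      unfolding x_def using orthonormal_basis_perp[OF w(1)] by simp
    moreover have "u k i = of_real (s k) * x k i" for k i
      using w(2)[of k i] 1 exhaust_two[of k] by (auto simp: x_def)
    ultimately show ?thesis using that by blast
  next
    case 2
    define x :: "2 \<Rightarrow> 2 \<Rightarrow> complex" where "x k = (if k = 0 then perp (w 1) else w 1)" for k
    have "cinner (perp (w 1)) (w 1) = 0"
      using cinner_commute[of "perp (w 1)" "w 1"] cinner_perp[of "w 1"] by simp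
    hence "orthonormal_basis x"
      by (intro orthonormal_basis_twoI) (simp_all add: x_def w(1) sqnorm_perp)
    moreover have "u k i = of_real (s k) * x k i" for k i
      using w(2)[of k i] 2 exhaust_two[of k] by (auto simp: x_def)
    ultimately show ?thesis using that by blast
  next
    case 3
    have "of_real (s 0 * s 1) * cinner (w 0) (w 1) = cinner (u 0) (u 1)"
      unfolding w(2) cinner_def by (simp add: sum_distrib_left mult_ac)
    hence "cinner (w 0) (w 1) = 0" using assms 3 by simp
    hence "orthonormal_basis w" by (intro orthonormal_basis_twoI w(1))
    with w(2) that show ?thesis by blast
  qed
  with that show ?thesis unfolding s_def by blast
qed

section \<open>Hermitian 2x2 matrices\<close>

definition hermitian :: "('m \<Rightarrow> 'm \<Rightarrow> complex) \<Rightarrow> bool" where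
  "hermitian M \<longleftrightarrow> (\<forall>i j. M j i = cnj (M i j))"

definition quad_form :: "('m::finite \<Rightarrow> 'm \<Rightarrow> complex) \<Rightarrow> ('m \<Rightarrow> complex) \<Rightarrow> real" where
  "quad_form M v = Re (\<Sum>i\<in>UNIV. \<Sum>j\<in>UNIV. cnj (v i) * M i j * v j)"

definition det2 :: "(2 \<Rightarrow> 2 \<Rightarrow> complex) \<Rightarrow> complex" where
  "det2 M = M 0 0 * M 1 1 - M 0 1 * M 1 0"

definition lmin2 :: "(2 \<Rightarrow> 2 \<Rightarrow> complex) \<Rightarrow> real" where
  "lmin2 M = (Re (M 0 0 + M 1 1) - sqrt ((Re (M 0 0 + M 1 1))\<^sup>2 - 4 * Re (det2 M))) / 2"

lemma hermitian_twoD: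
  assumes "hermitian M"
  shows "M 0 0 = of_real (Re (M 0 0))" "M 1 1 = of_real (Re (M 1 1))" "M 1 0 = cnj (M 0 1)"
proof -
  have "M j i = cnj (M i j)" for i j
    using assms unfolding hermitian_def by blast
  hence "M 0 0 = cnj (M 0 0)" "M 1 1 = cnj (M 1 1)" "M 1 0 = cnj (M 0 1)"
    by blast+
  thus "M 0 0 = of_real (Re (M 0 0))" "M 1 1 = of_real (Re (M 1 1))" "M 1 0 = cnj (M 0 1)"
    by (auto simp: complex_eq_iff)
qed

lemma lmin2_hermitian:
  assumes "hermitian M"
  shows "lmin2 M \<le> Re (M 0 0)" "lmin2 M \<le> Re (M 1 1)"
    "(Re (M 0 0) - lmin2 M) * (Re (M 1 1) - lmin2 M) = (cmod (M 0 1))\<^sup>2"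
proof -
  define p r w where "p = Re (M 0 0)" and "r = Re (M 1 1)" and "w = cmod (M 0 1)"
  define s where "s = sqrt ((p - r)\<^sup>2 + 4 * w\<^sup>2)"
  have "M 0 0 = of_real p" "M 1 1 = of_real r" "M 1 0 = cnj (M 0 1)"
    using hermitian_twoD[OF assms] unfolding p_def r_def by simp_all
  hence "det2 M = of_real p * of_real r - M 0 1 * cnj (M 0 1)"
    unfolding det2_def by simp
  hence "Re (det2 M) = p * r - w\<^sup>2"
    unfolding w_def complex_norm_square[symmetric] by simp
  moreover have "(p + r)\<^sup>2 - 4 * (p * r - w\<^sup>2) = (p - r)\<^sup>2 + 4 * w\<^sup>2"
    by (simp add: power2_eq_square algebra_simps)
  ultimately have lmin: "lmin2 M = (p + r - s) / 2"
    unfolding lmin2_def s_def p_def r_def by simp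
  have "sqrt ((p - r)\<^sup>2) \<le> s"
    unfolding s_def by (rule real_sqrt_le_mono) simp
  thus "lmin2 M \<le> Re (M 0 0)" "lmin2 M \<le> Re (M 1 1)"
    unfolding lmin p_def[symmetric] r_def[symmetric] by auto
  have "(p - lmin2 M) * (r - lmin2 M) = (s\<^sup>2 - (p - r)\<^sup>2) / 4"
    unfolding lmin by (simp add: field_simps power2_eq_square)
  also have "\<dots> = w\<^sup>2" unfolding s_def by simp
  finally show "(Re (M 0 0) - lmin2 M) * (Re (M 1 1) - lmin2 M) = (cmod (M 0 1))\<^sup>2"
    unfolding p_def r_def w_def .
qed

lemma quad_form_hermitian_two:
  fixes M :: "2 \<Rightarrow> 2 \<Rightarrow> complex"
  assumes "hermitian M"
  shows "quad_form M v = Re (M 0 0) * (cmod (v 0))\<^sup>2 + Re (M 1 1) * (cmod (v 1))\<^sup>2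
                         + 2 * Re (M 0 1 * cnj (v 0) * v 1)"
proof -
  note entries = hermitian_twoD[OF assms]
  show ?thesis unfolding quad_form_def sum_UNIV_two
    apply (subst entries(1), subst entries(2), subst entries(3))
    apply (simp only: cmod_power2)
    by (simp add: algebra_simps power2_eq_square)
qed

lemma quad_form_eigenvector:
  assumes "sqnorm v = 1" "\<forall>i. (\<Sum>j\<in>UNIV. M i j * v j) = of_real x * v i"
  shows "quad_form M v = x"
proof -
  have "(\<Sum>i\<in>UNIV. \<Sum>j\<in>UNIV. cnj (v i) * M i j * v j) = (\<Sum>i\<in>UNIV. cnj (v i) * (\<Sum>j\<in>UNIV. M i j * v j))"
    by (simp add: sum_distrib_left mult.assoc)
  also have "\<dots> = of_real x * cinner v v"
    using assms(2) unfolding cinner_def by (simp add: sum_distrib_left algebra_simps)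
  finally show ?thesis unfolding quad_form_def cinner_self assms(1) by simp
qed

lemma lmin2_le_quad_form:
  assumes "hermitian M" and "sqnorm v = 1"
  shows "lmin2 M \<le> quad_form M v"
proof -
  define a b where "a = Re (M 0 0) - lmin2 M" and "b = Re (M 1 1) - lmin2 M"
  define x y where "x = cmod (v 0)" and "y = cmod (v 1)"
  have "a \<ge> 0" "b \<ge> 0" "a * b = (cmod (M 0 1))\<^sup>2"
    using lmin2_hermitian[OF assms(1)] unfolding a_def b_def by auto
  hence off_diag: "cmod (M 0 1) = sqrt a * sqrt b"
    by (metis norm_ge_zero real_sqrt_abs real_sqrt_mult abs_of_nonneg)
  have "x\<^sup>2 + y\<^sup>2 = 1" using assms(2) unfolding sqnorm_def sum_UNIV_two x_def y_def .
  moreover have "quad_form M v = lmin2 M * (x\<^sup>2 + y\<^sup>2) + a * x\<^sup>2 + b * y\<^sup>2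
                                   + 2 * Re (M 0 1 * cnj (v 0) * v 1)"
    unfolding quad_form_hermitian_two[OF assms(1)] a_def b_def x_def y_def
    by (simp add: algebra_simps)
  ultimately have "quad_form M v = lmin2 M + a * x\<^sup>2 + b * y\<^sup>2 + 2 * Re (M 0 1 * cnj (v 0) * v 1)"
    by simp
  moreover have "- (sqrt a * sqrt b * x * y) \<le> Re (M 0 1 * cnj (v 0) * v 1)"
    using abs_Re_le_cmod[of "M 0 1 * cnj (v 0) * v 1"]
    unfolding x_def y_def norm_mult off_diag by simp
  moreover have "0 \<le> (sqrt a * x - sqrt b * y)\<^sup>2" by simp
  hence "0 \<le> a * x\<^sup>2 + b * y\<^sup>2 - 2 * (sqrt a * sqrt b * x * y)"
    using \<open>a \<ge> 0\<close> \<open>b \<ge> 0\<close> by (simp add: power2_eq_square algebra_simps)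
  ultimately show ?thesis by linarith
qed

(* Since det (M - mu I) = 0, a vector annihilated by a nonzero row of M - mu I is an eigenvector. *)
lemma eigenvector_two_exists:
  fixes M :: "2 \<Rightarrow> 2 \<Rightarrow> complex"
  assumes "(M 0 0 - \<mu>) * (M 1 1 - \<mu>) - M 0 1 * M 1 0 = 0"
  obtains v where "v \<noteq> (\<lambda>_. 0)" "\<forall>i. (\<Sum>j\<in>UNIV. M i j * v j) = \<mu> * v i"
proof -
  consider "M 0 1 \<noteq> 0 \<or> M 0 0 \<noteq> \<mu>" | "M 1 0 \<noteq> 0 \<or> M 1 1 \<noteq> \<mu>"
    | "M 0 1 = 0" "M 0 0 = \<mu>" "M 1 0 = 0" "M 1 1 = \<mu>" by blast
  then show ?thesis
  proof cases
    case 1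
    define v :: "2 \<Rightarrow> complex" where "v i = (if i = 0 then M 0 1 else \<mu> - M 0 0)" for i
    have "M 1 0 * M 0 1 + M 1 1 * (\<mu> - M 0 0) = \<mu> * (\<mu> - M 0 0)"
      using assms by (simp add: algebra_simps)
    hence "\<forall>i. (\<Sum>j\<in>UNIV. M i j * v j) = \<mu> * v i"
      unfolding all_two sum_UNIV_two v_def by (simp add: algebra_simps)
    moreover have "v \<noteq> (\<lambda>_. 0)" using 1 by (auto simp: v_def fun_eq_iff all_two)
    ultimately show ?thesis using that by blast
  next
    case 2
    define v :: "2 \<Rightarrow> complex" where "v i = (if i = 0 then \<mu> - M 1 1 else M 1 0)" for i
    have "M 0 0 * (\<mu> - M 1 1) + M 0 1 * M 1 0 = \<mu> * (\<mu> - M 1 1)"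
      using assms by (simp add: algebra_simps)
    hence "\<forall>i. (\<Sum>j\<in>UNIV. M i j * v j) = \<mu> * v i"
      unfolding all_two sum_UNIV_two v_def by (simp add: algebra_simps)
    moreover have "v \<noteq> (\<lambda>_. 0)" using 2 by (auto simp: v_def fun_eq_iff all_two)
    ultimately show ?thesis using that by blast
  next
    case 3
    define v :: "2 \<Rightarrow> complex" where "v i = (if i = 0 then 1 else 0)" for i
    have "\<forall>i. (\<Sum>j\<in>UNIV. M i j * v j) = \<mu> * v i"
      unfolding all_two sum_UNIV_two v_def using 3 by simp
    moreover have "v \<noteq> (\<lambda>_. 0)" by (auto simp: v_def fun_eq_iff)
    ultimately show ?thesis using that by blast
  qed
qed

lemma unit_eigenvector:
  fixes M :: "'m::finite \<Rightarrow> 'm \<Rightarrow> complex"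
  assumes "v \<noteq> (\<lambda>_. 0)" "\<forall>i. (\<Sum>j\<in>UNIV. M i j * v j) = x * v i"
  obtains w where "sqnorm w = 1" "\<forall>i. (\<Sum>j\<in>UNIV. M i j * w j) = x * w i"
proof -
  obtain w where w: "sqnorm w = 1" "\<And>i. v i = of_real (sqrt (sqnorm v)) * w i"
    using exists_unit_multiple by blast
  define c where "c = complex_of_real (sqrt (sqnorm v))"
  have "c \<noteq> 0" using sqnorm_pos[OF assms(1)] by (simp add: c_def)
  moreover have "c * (\<Sum>j\<in>UNIV. M i j * w j) = c * (x * w i)" for i
    using assms(2) unfolding w(2) c_def[symmetric] by (simp add: sum_distrib_left algebra_simps)
  ultimately show ?thesis using that w(1) by simp
qed

lemma hermitian_lmin2_eigenvector:
  assumes "hermitian M"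
  obtains v where "sqnorm v = 1" "\<forall>i. (\<Sum>j\<in>UNIV. M i j * v j) = of_real (lmin2 M) * v i"
proof -
  define \<mu> where "\<mu> = lmin2 M"
  note entries = hermitian_twoD[OF assms]
  have "(M 0 0 - of_real \<mu>) * (M 1 1 - of_real \<mu>) - M 0 1 * M 1 0
      = of_real ((Re (M 0 0) - \<mu>) * (Re (M 1 1) - \<mu>) - (cmod (M 0 1))\<^sup>2)"
    apply (subst entries(1), subst entries(2), subst entries(3))
    by (simp only: of_real_diff of_real_mult complex_norm_square)
  also have "\<dots> = 0" using lmin2_hermitian(3)[OF assms] unfolding \<mu>_def by simp
  finally obtain v where "v \<noteq> (\<lambda>_. 0)" "\<forall>i. (\<Sum>j\<in>UNIV. M i j * v j) = of_real \<mu> * v i"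
    using eigenvector_two_exists by blast
  with unit_eigenvector that show ?thesis unfolding \<mu>_def by blast
qed

lemma eig_min_eq_lmin2:
  assumes "hermitian M"
  shows "eig_min M = lmin2 M"
proof -
  obtain v where v: "sqnorm v = 1" "\<forall>i. (\<Sum>j\<in>UNIV. M i j * v j) = of_real (lmin2 M) * v i"
    using hermitian_lmin2_eigenvector[OF assms] by blast
  have "v \<noteq> (\<lambda>_. 0)" using v(1) by (auto simp: sqnorm_def)
  hence "lmin2 M \<in> eigvals2 M" unfolding eigvals2_def using v(2) by blast
  moreover have "lmin2 M \<le> x" if eigval: "x \<in> eigvals2 M" for x
  proof -
    obtain u where "u \<noteq> (\<lambda>_. 0)" "\<forall>i. (\<Sum>j\<in>UNIV. M i j * u j) = of_real x * u i"
      using eigval unfolding eigvals2_def by blast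
    then obtain w where w: "sqnorm w = 1" "\<forall>i. (\<Sum>j\<in>UNIV. M i j * w j) = of_real x * w i"
      by (rule unit_eigenvector)
    show ?thesis using lmin2_le_quad_form[OF assms w(1)] quad_form_eigenvector[OF w] by simp
  qed
  ultimately show ?thesis unfolding eig_min_def by (rule cInf_eq_minimum)
qed

lemma quad_form_sum:
  fixes R :: "'k \<Rightarrow> 'm::finite \<Rightarrow> 'm \<Rightarrow> complex"
  shows "quad_form (\<lambda>i j. \<Sum>k\<in>A. of_real (p k) * R k i j) v = (\<Sum>k\<in>A. p k * quad_form (R k) v)"
proof -
  have "(\<Sum>i\<in>UNIV. \<Sum>j\<in>UNIV. cnj (v i) * (\<Sum>k\<in>A. of_real (p k) * R k i j) * v j)
      = (\<Sum>k\<in>A. of_real (p k) * (\<Sum>i\<in>UNIV. \<Sum>j\<in>UNIV. cnj (v i) * R k i j * v j))"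
    by (simp add: sum_distrib_left sum_distrib_right mult_ac sum.swap[of _ A])
  thus ?thesis unfolding quad_form_def by (simp add: Re_sum)
qed

lemma hermitian_sum:
  assumes "\<And>k. k \<in> A \<Longrightarrow> hermitian (R k)"
  shows "hermitian (\<lambda>i i'. \<Sum>k\<in>A. of_real (p k) * R k i i')"
proof -
  have "cnj (R k i j) = R k j i" if "k \<in> A" for k i j
    using assms[OF that, unfolded hermitian_def, rule_format, of j i, symmetric] .
  thus ?thesis unfolding hermitian_def by (simp add: cnj_sum)
qed

lemma lmin2_concave:
  fixes R :: "'k \<Rightarrow> 2 \<Rightarrow> 2 \<Rightarrow> complex"
  assumes "\<And>k. k \<in> A \<Longrightarrow> hermitian (R k)" and "\<And>k. k \<in> A \<Longrightarrow> p k \<ge> 0"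
  shows "(\<Sum>k\<in>A. p k * lmin2 (R k)) \<le> lmin2 (\<lambda>i i'. \<Sum>k\<in>A. of_real (p k) * R k i i')"
    (is "_ \<le> lmin2 ?M")
proof -
  have "hermitian ?M" using assms(1) by (rule hermitian_sum)
  then obtain v where v: "sqnorm v = 1" "\<forall>i. (\<Sum>j\<in>UNIV. ?M i j * v j) = of_real (lmin2 ?M) * v i"
    by (rule hermitian_lmin2_eigenvector)
  have "(\<Sum>k\<in>A. p k * lmin2 (R k)) \<le> (\<Sum>k\<in>A. p k * quad_form (R k) v)"
    by (intro sum_mono mult_left_mono lmin2_le_quad_form v(1)) (simp_all add: assms)
  also have "\<dots> = quad_form ?M v"
    by (rule quad_form_sum[symmetric])
  also have "\<dots> = lmin2 ?M" by (rule quad_form_eigenvector[OF v])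
  finally show ?thesis .
qed

section \<open>Norm and determinant of two-qubit states\<close>

definition frob_sq :: "('a::finite \<Rightarrow> 'b::finite \<Rightarrow> complex) \<Rightarrow> real" where
  "frob_sq phi = (\<Sum>i\<in>UNIV. \<Sum>j\<in>UNIV. (cmod (phi i j))\<^sup>2)"

lemma frob_sq_rows: "frob_sq phi = (\<Sum>i\<in>UNIV. sqnorm (phi i))"
  unfolding frob_sq_def sqnorm_def ..

lemma frob_sq_cols: "frob_sq phi = (\<Sum>j\<in>UNIV. sqnorm (\<lambda>i. phi i j))"
  unfolding frob_sq_def sqnorm_def by (rule sum.swap)

lemma frob_sq_transpose: "frob_sq (\<lambda>j i. phi i j) = frob_sq phi"
  unfolding frob_sq_def by (rule sum.swap)

lemma frob_sq_eq_sqnorm: "frob_sq phi = sqnorm (case_prod phi)"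
  unfolding frob_sq_def sqnorm_def by (simp add: sum.cartesian_product split_def)

lemma of_real_frob_sq: "of_real (frob_sq phi) = (\<Sum>i\<in>UNIV. \<Sum>j\<in>UNIV. phi i j * cnj (phi i j))"
  unfolding frob_sq_def of_real_sum complex_norm_square ..

lemma normalized2_iff_frob_sq: "normalized2 phi \<longleftrightarrow> frob_sq phi = 1"
  unfolding normalized2_def frob_sq_def ..

lemma exists_normalized2_multiple:
  obtains phi where "normalized2 phi" "\<And>a b. V a b = of_real (sqrt (frob_sq V)) * phi a b"
proof -
  obtain w where w: "sqnorm w = 1" "\<And>x. case_prod V x = of_real (sqrt (sqnorm (case_prod V))) * w x"
    using exists_unit_multiple[of "case_prod V"] by blast
  have "normalized2 (curry w)"
    using w(1) unfolding normalized2_iff_frob_sq frob_sq_eq_sqnorm by simp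
  moreover have "V a b = of_real (sqrt (frob_sq V)) * curry w a b" for a b
    using w(2)[of "(a, b)"] unfolding frob_sq_eq_sqnorm by simp
  ultimately show ?thesis using that by blast
qed

lemma det2_gram:
  fixes a :: "2 \<Rightarrow> 2 \<Rightarrow> complex"
  shows "cinner (a 0) (a 0) * cinner (a 1) (a 1) - cinner (a 0) (a 1) * cinner (a 1) (a 0)
       = of_real ((cmod (det2 a))\<^sup>2)"
  unfolding cinner_def sum_UNIV_two det2_def complex_norm_square by (simp add: algebra_simps)

lemma cmod_det2_orthonormal_basis:
  assumes "orthonormal_basis e"
  shows "cmod (det2 e) = 1"
proof -
  have "of_real ((cmod (det2 e))\<^sup>2) = (1 :: complex)"
    using det2_gram[of e] assms unfolding orthonormal_basis_cinner by simp
  hence "(cmod (det2 e))\<^sup>2 = 1" by (rule of_real_eq_1_iff[THEN iffD1])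
  thus ?thesis using norm_ge_zero[of "det2 e"] by (simp add: power2_eq_1_iff)
qed

definition prod_basis_coeffs ::
    "('a::finite \<Rightarrow> 'a \<Rightarrow> complex) \<Rightarrow> ('b::finite \<Rightarrow> 'b \<Rightarrow> complex) \<Rightarrow> ('a \<Rightarrow> 'b \<Rightarrow> complex) \<Rightarrow> 'a \<Rightarrow> 'b \<Rightarrow> complex" where
  "prod_basis_coeffs P Q V i j = (\<Sum>a\<in>UNIV. \<Sum>b\<in>UNIV. cnj (P i a) * cnj (Q j b) * V a b)"

lemma prod_basis_coeffs_cinner:
  "prod_basis_coeffs P Q V i j = cinner (P i) (\<lambda>a. cinner (Q j) (V a))"
  unfolding prod_basis_coeffs_def cinner_def by (simp add: sum_distrib_left mult.assoc)

lemma prod_basis_coeffs_sum: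
  "prod_basis_coeffs P Q (\<lambda>a b. \<Sum>k\<in>A. c k * R k a * S k b) i j
     = (\<Sum>k\<in>A. c k * cinner (P i) (R k) * cinner (Q j) (S k))"
proof -
  have "(\<lambda>a. cinner (Q j) (\<lambda>b. \<Sum>k\<in>A. c k * R k a * S k b))
      = (\<lambda>a. \<Sum>k\<in>A. (c k * cinner (Q j) (S k)) * R k a)"
    by (simp add: cinner_sum_right cinner_scale_right mult_ac)
  hence "prod_basis_coeffs P Q (\<lambda>a b. \<Sum>k\<in>A. c k * R k a * S k b) i j
      = cinner (P i) (\<lambda>a. \<Sum>k\<in>A. (c k * cinner (Q j) (S k)) * R k a)"
    by (simp only: prod_basis_coeffs_cinner)
  also have "\<dots> = (\<Sum>k\<in>A. c k * cinner (P i) (R k) * cinner (Q j) (S k))"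
    unfolding cinner_sum_right cinner_scale_right by (simp add: mult_ac)
  finally show ?thesis .
qed

lemma frob_sq_prod_basis_coeffs:
  assumes "orthonormal_basis P" "orthonormal_basis Q"
  shows "frob_sq (prod_basis_coeffs P Q V) = frob_sq V"
proof -
  have "frob_sq (prod_basis_coeffs P Q V) = (\<Sum>j\<in>UNIV. sqnorm (\<lambda>i. prod_basis_coeffs P Q V i j))"
    by (rule frob_sq_cols)
  also have "\<dots> = (\<Sum>j\<in>UNIV. sqnorm (\<lambda>a. cinner (Q j) (V a)))"
    unfolding prod_basis_coeffs_cinner orthonormal_basis_sqnorm[OF assms(1)] ..
  also have "\<dots> = frob_sq (\<lambda>a j. cinner (Q j) (V a))"
    by (rule frob_sq_cols[symmetric])
  also have "\<dots> = frob_sq V"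
    unfolding frob_sq_rows orthonormal_basis_sqnorm[OF assms(2)] ..
  finally show ?thesis .
qed

lemma det2_prod_basis_coeffs:
  "det2 (prod_basis_coeffs P Q V) = cnj (det2 P) * det2 V * cnj (det2 Q)"
  unfolding prod_basis_coeffs_def det2_def sum_UNIV_two complex_cnj_add complex_cnj_mult
    complex_cnj_diff
  by algebra

lemma cmod_det2_prod_basis_coeffs:
  assumes "orthonormal_basis P" "orthonormal_basis Q"
  shows "cmod (det2 (prod_basis_coeffs P Q V)) = cmod (det2 V)"
  unfolding det2_prod_basis_coeffs
  using cmod_det2_orthonormal_basis[OF assms(1)] cmod_det2_orthonormal_basis[OF assms(2)]
  by (simp add: norm_mult)

section \<open>The smaller Schmidt coefficient\<close>

definition schmidt_min :: "(2 \<Rightarrow> 2 \<Rightarrow> complex) \<Rightarrow> real" where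
  "schmidt_min phi = (frob_sq phi - sqrt ((frob_sq phi)\<^sup>2 - 4 * (cmod (det2 phi))\<^sup>2)) / 2"

lemma schmidt_min_eqI:
  assumes "frob_sq phi = q0 + q1" "(cmod (det2 phi))\<^sup>2 = q0 * q1" "q1 \<le> q0"
  shows "schmidt_min phi = q1"
proof -
  have "(frob_sq phi)\<^sup>2 - 4 * (cmod (det2 phi))\<^sup>2 = (q0 - q1)\<^sup>2"
    unfolding assms(1,2) by (simp add: power2_eq_square algebra_simps)
  thus ?thesis unfolding schmidt_min_def using assms(1,3) by simp
qed

lemma schmidt_min_prod_basis_coeffs:
  assumes "orthonormal_basis P" "orthonormal_basis Q"
  shows "schmidt_min (prod_basis_coeffs P Q V) = schmidt_min V"
  unfolding schmidt_min_def frob_sq_prod_basis_coeffs[OF assms] cmod_det2_prod_basis_coeffs[OF assms] ..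

lemma schmidt_min_transpose: "schmidt_min (\<lambda>j i. phi i j) = schmidt_min phi"
proof -
  have "det2 (\<lambda>j i. phi i j) = det2 phi" unfolding det2_def by (simp add: mult.commute)
  thus ?thesis unfolding schmidt_min_def frob_sq_transpose[of phi] by simp
qed

lemma schmidt_min_scale: "schmidt_min (\<lambda>a b. c * phi a b) = (cmod c)\<^sup>2 * schmidt_min phi"
proof -
  define F D where "F = frob_sq phi" and "D = cmod (det2 phi)"
  have F: "frob_sq (\<lambda>a b. c * phi a b) = (cmod c)\<^sup>2 * F"
    unfolding frob_sq_def F_def by (simp add: norm_mult power_mult_distrib sum_distrib_left)
  have "det2 (\<lambda>a b. c * phi a b) = c\<^sup>2 * det2 phi"
    unfolding det2_def by (simp add: algebra_simps power2_eq_square)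
  hence D: "cmod (det2 (\<lambda>a b. c * phi a b)) = (cmod c)\<^sup>2 * D"
    unfolding D_def by (simp add: norm_mult norm_power)
  have "((cmod c)\<^sup>2 * F)\<^sup>2 - 4 * ((cmod c)\<^sup>2 * D)\<^sup>2 = ((cmod c)\<^sup>2)\<^sup>2 * (F\<^sup>2 - 4 * D\<^sup>2)"
    by (simp add: power_mult_distrib algebra_simps)
  hence "sqrt (((cmod c)\<^sup>2 * F)\<^sup>2 - 4 * ((cmod c)\<^sup>2 * D)\<^sup>2) = (cmod c)\<^sup>2 * sqrt (F\<^sup>2 - 4 * D\<^sup>2)"
    by (simp only: real_sqrt_mult real_sqrt_abs abs_power2)
  thus ?thesis unfolding schmidt_min_def F D F_def[symmetric] D_def[symmetric]
    by (simp add: algebra_simps)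
qed

lemma schmidt_decomp_coeffs:
  assumes "schmidt_decomp phi l"
  obtains a b where "orthonormal_basis a" "orthonormal_basis b"
    "prod_basis_coeffs a b phi = (\<lambda>i j. if i = j then of_real (sqrt (l i)) else 0)"
proof -
  obtain a b where ab: "orthonormal_basis a" "orthonormal_basis b"
      "\<forall>i j. phi i j = (\<Sum>k\<in>UNIV. of_real (sqrt (l k)) * a k i * b k j)"
    using assms unfolding schmidt_decomp_def by blast
  hence phi: "phi = (\<lambda>i j. \<Sum>k\<in>UNIV. of_real (sqrt (l k)) * a k i * b k j)" by blast
  have "prod_basis_coeffs a b phi i j = (if i = j then of_real (sqrt (l i)) else 0)" for i j
    unfolding phi prod_basis_coeffs_sum using ab(1,2) exhaust_two[of i] exhaust_two[of j]
    unfolding orthonormal_basis_cinner by (auto simp: sum_UNIV_two)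
  hence "prod_basis_coeffs a b phi = (\<lambda>i j. if i = j then of_real (sqrt (l i)) else 0)"
    by blast
  with ab(1,2) that show ?thesis by blast
qed

lemma schmidt_decomp_min:
  assumes "schmidt_decomp phi l"
  shows "schmidt_min phi = min (l 0) (l 1)"
proof -
  obtain a b where ab: "orthonormal_basis a" "orthonormal_basis b"
    "prod_basis_coeffs a b phi = (\<lambda>i j. if i = j then of_real (sqrt (l i)) else 0)"
    using assms by (rule schmidt_decomp_coeffs)
  have l: "l 0 \<ge> 0" "l 1 \<ge> 0" using assms unfolding schmidt_decomp_def by auto
  have "schmidt_min phi = schmidt_min (prod_basis_coeffs a b phi)"
    by (rule schmidt_min_prod_basis_coeffs[OF ab(1,2), symmetric])
  also have "\<dots> = min (l 0) (l 1)"
  proof (rule schmidt_min_eqI)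
    show "frob_sq (prod_basis_coeffs a b phi) = max (l 0) (l 1) + min (l 0) (l 1)"
      unfolding ab(3) frob_sq_def sum_UNIV_two using l by (simp add: max_def min_def)
    show "(cmod (det2 (prod_basis_coeffs a b phi)))\<^sup>2 = max (l 0) (l 1) * min (l 0) (l 1)"
      unfolding ab(3) det2_def using l by (simp add: max_def min_def norm_mult power_mult_distrib)
  qed simp
  finally show ?thesis .
qed

lemma schmidt_decomp_exists:
  fixes phi :: "2 \<Rightarrow> 2 \<Rightarrow> complex"
  obtains l where "schmidt_decomp phi l"
proof -
  define H where "H j j' = cinner (\<lambda>i. phi i j) (\<lambda>i. phi i j')" for j j'
  have "hermitian H"
    unfolding hermitian_def H_def by (intro allI) (rule cinner_commute)
  then obtain y where y: "sqnorm y = 1" "\<forall>j. (\<Sum>j'\<in>UNIV. H j j' * y j') = of_real (lmin2 H) * y j"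
    by (rule hermitian_lmin2_eigenvector)
  define Y :: "2 \<Rightarrow> 2 \<Rightarrow> complex" where "Y k = (if k = 0 then y else perp y)" for k
  have Y: "orthonormal_basis Y"
    unfolding Y_def using orthonormal_basis_perp[OF y(1)] by simp
  define u where "u k i = (\<Sum>j\<in>UNIV. phi i j * Y k j)" for k i
  have gram: "cinner (u k) (u k') = cinner (Y k) (\<lambda>j. \<Sum>j'\<in>UNIV. H j j' * Y k' j')" for k k'
    unfolding u_def H_def cinner_def sum_UNIV_two by (simp add: algebra_simps)
  have "cinner (u 1) (u 0) = cinner (Y 1) (\<lambda>j. \<Sum>j'\<in>UNIV. H j j' * Y 0 j')"
    by (rule gram)
  also have "(\<lambda>j. \<Sum>j'\<in>UNIV. H j j' * Y 0 j') = (\<lambda>j. of_real (lmin2 H) * Y 0 j)"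
    using y(2) by (simp add: Y_def)
  finally have "cinner (u 1) (u 0) = of_real (lmin2 H) * cinner (Y 1) (Y 0)"
    by (simp only: cinner_scale_right)
  also have "cinner (Y 1) (Y 0) = 0"
    using Y unfolding orthonormal_basis_cinner by simp
  finally have "cinner (u 0) (u 1) = 0"
    using cinner_commute[of "u 0" "u 1"] by simp
  then obtain x where x: "orthonormal_basis x" "\<And>k i. u k i = of_real (sqrt (sqnorm (u k))) * x k i"
    using orthogonal_pair_scaled_basis by blast
  define l where "l k = sqnorm (u k)" for k
  have "phi i j = (\<Sum>k\<in>UNIV. of_real (sqrt (l k)) * x k i * cnj (Y k j))" for i j
  proof -
    have "(\<Sum>k\<in>UNIV. of_real (sqrt (l k)) * x k i * cnj (Y k j))
        = (\<Sum>j'\<in>UNIV. phi i j' * (\<Sum>k\<in>UNIV. cnj (Y k j) * Y k j'))"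
      unfolding l_def x(2)[symmetric] u_def sum_UNIV_two by (simp add: algebra_simps)
    also have "\<dots> = phi i j"
      unfolding orthonormal_basis_complete[OF Y] using exhaust_two[of j] by (auto simp: sum_UNIV_two)
    finally show ?thesis by simp
  qed
  hence "schmidt_decomp phi l"
    unfolding schmidt_decomp_def using x(1) orthonormal_basis_conj[OF Y]
    by (auto simp: l_def sqnorm_nonneg)
  with that show ?thesis by blast
qed

lemma lambda_min_eq_schmidt_min: "lambda_min phi = schmidt_min phi"
proof -
  obtain l where "schmidt_decomp phi l" by (rule schmidt_decomp_exists)
  moreover have "min (l' 0) (l' 1) = schmidt_min phi" if "schmidt_decomp phi l'" for l'
    using schmidt_decomp_min[OF that] by simp
  ultimately have "{min (l 0) (l 1) | l. schmidt_decomp phi l} = {schmidt_min phi}"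
    by (auto intro!: exI[of _ l])
  thus ?thesis unfolding lambda_min_def by simp
qed

lemma E2_eq_schmidt_min: "E2 phi = 2 * schmidt_min phi"
  unfolding E2_def lambda_min_eq_schmidt_min ..

definition reduced_A :: "('a \<Rightarrow> 'b::finite \<Rightarrow> complex) \<Rightarrow> 'a \<Rightarrow> 'a \<Rightarrow> complex" where
  "reduced_A phi i i' = cinner (phi i') (phi i)"

lemma hermitian_reduced_A: "hermitian (reduced_A phi)"
  unfolding hermitian_def reduced_A_def by (intro allI) (rule cinner_commute)

lemma lmin2_reduced_A: "lmin2 (reduced_A phi) = schmidt_min phi"
proof -
  have "Re (reduced_A phi 0 0 + reduced_A phi 1 1) = frob_sq phi"
    unfolding reduced_A_def cinner_self frob_sq_rows sum_UNIV_two by simp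
  moreover have "det2 (reduced_A phi) = cinner (phi 0) (phi 0) * cinner (phi 1) (phi 1)
                                        - cinner (phi 0) (phi 1) * cinner (phi 1) (phi 0)"
    unfolding det2_def reduced_A_def by (simp add: mult.commute)
  hence "det2 (reduced_A phi) = of_real ((cmod (det2 phi))\<^sup>2)"
    unfolding det2_gram .
  ultimately show ?thesis unfolding lmin2_def schmidt_min_def by simp
qed

lemma schmidt_min_eq_of_reduced_A_diag:
  assumes "reduced_A phi = (\<lambda>i i'. if i = i' then of_real (q i) else 0)" and "q 1 \<le> q 0"
  shows "schmidt_min phi = q 1"
proof -
  have "(q 0 + q 1)\<^sup>2 - 4 * (q 0 * q 1) = (q 0 - q 1)\<^sup>2"
    by (simp add: power2_eq_square algebra_simps)
  thus ?thesis
    unfolding lmin2_reduced_A[symmetric] assms(1) lmin2_def det2_def using assms(2) by simp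
qed

lemma schmidt_min_of_row_gram:
  assumes "\<forall>i i'. (\<Sum>j\<in>UNIV. A i j * cnj (A i' j)) = (if i = i' then of_real (q i) else 0)"
    and "q 1 \<le> q 0"
  shows "schmidt_min A = q 1"
proof (rule schmidt_min_eq_of_reduced_A_diag[OF _ assms(2)])
  show "reduced_A A = (\<lambda>i i'. if i = i' then of_real (q i) else 0)"
    using assms(1) unfolding reduced_A_def cinner_def by (simp add: mult.commute)
qed

lemma schmidt_min_of_col_gram:
  assumes "\<forall>j j'. (\<Sum>i\<in>UNIV. cnj (A i j) * A i j') = (if j = j' then of_real (q j) else 0)"
    and "q 1 \<le> q 0"
  shows "schmidt_min A = q 1"
proof -
  have "reduced_A (\<lambda>j i. A i j) = (\<lambda>j j'. if j = j' then of_real (q j) else 0)"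
    using assms(1) unfolding reduced_A_def cinner_def by (auto intro!: ext)
  from schmidt_min_eq_of_reduced_A_diag[OF this assms(2)] show ?thesis
    unfolding schmidt_min_transpose[of A] .
qed

section \<open>Concavity bound for pure-state decompositions\<close>

lemma rhoA_pure_decomp:
  assumes "pure_decomp psi K p phi"
  shows "rhoA psi = (\<lambda>i i'. \<Sum>k<K. of_real (p k) * reduced_A (phi k) i i')"
proof (intro ext)
  fix i i'
  have "rhoA psi i i' = (\<Sum>j\<in>UNIV. rhoAB psi (i, j) (i', j))"
    unfolding rhoA_def rhoAB_def by simp
  also have "\<dots> = (\<Sum>j\<in>UNIV. \<Sum>k<K. of_real (p k) * phi k i j * cnj (phi k i' j))"
    using assms unfolding pure_decomp_def by simp
  also have "\<dots> = (\<Sum>k<K. of_real (p k) * reduced_A (phi k) i i')"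
    unfolding reduced_A_def cinner_def
    by (simp add: sum_distrib_left mult_ac sum.swap[of _ "{..<K}"])
  finally show "rhoA psi i i' = (\<Sum>k<K. of_real (p k) * reduced_A (phi k) i i')" .
qed

lemma rhoB_pure_decomp:
  assumes "pure_decomp psi K p phi"
  shows "rhoB psi = (\<lambda>j j'. \<Sum>k<K. of_real (p k) * reduced_A (\<lambda>j i. phi k i j) j j')"
proof (intro ext)
  fix j j'
  have "rhoB psi j j' = (\<Sum>i\<in>UNIV. rhoAB psi (i, j) (i, j'))"
    unfolding rhoB_def rhoAB_def by simp
  also have "\<dots> = (\<Sum>i\<in>UNIV. \<Sum>k<K. of_real (p k) * phi k i j * cnj (phi k i j'))"
    using assms unfolding pure_decomp_def by simp
  also have "\<dots> = (\<Sum>k<K. of_real (p k) * reduced_A (\<lambda>j i. phi k i j) j j')"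
    unfolding reduced_A_def cinner_def
    by (simp add: sum_distrib_left mult_ac sum.swap[of _ "{..<K}"])
  finally show "rhoB psi j j' = (\<Sum>k<K. of_real (p k) * reduced_A (\<lambda>j i. phi k i j) j j')" .
qed

lemma weighted_schmidt_min_le_eig_min:
  fixes phi :: "'k \<Rightarrow> 2 \<Rightarrow> 2 \<Rightarrow> complex"
  assumes "\<And>k. k \<in> A \<Longrightarrow> p k \<ge> 0"
  shows "(\<Sum>k\<in>A. p k * schmidt_min (phi k))
           \<le> eig_min (\<lambda>i i'. \<Sum>k\<in>A. of_real (p k) * reduced_A (phi k) i i')"
  unfolding eig_min_eq_lmin2[OF hermitian_sum[OF hermitian_reduced_A]] lmin2_reduced_A[symmetric]
  using assms by (intro lmin2_concave hermitian_reduced_A)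

lemma decomp_value_le_E_A_BS:
  assumes "v \<in> decomp_values psi"
  shows "v \<le> E_A_BS psi"
proof -
  obtain K p phi where v: "v = (\<Sum>k<K. p k * E2 (phi k))" and pd: "pure_decomp psi K p phi"
    using assms unfolding decomp_values_def by blast
  have "v = 2 * (\<Sum>k<K. p k * schmidt_min (phi k))"
    unfolding v E2_eq_schmidt_min sum_distrib_left by (simp add: mult.left_commute)
  moreover have "(\<Sum>k<K. p k * schmidt_min (phi k)) \<le> eig_min (rhoA psi)"
    unfolding rhoA_pure_decomp[OF pd]
    by (rule weighted_schmidt_min_le_eig_min) (use pd in \<open>simp add: pure_decomp_def\<close>)
  ultimately show ?thesis unfolding E_A_BS_def by simp
qed

lemma decomp_value_le_E_B_AS:
  assumes "v \<in> decomp_values psi"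
  shows "v \<le> E_B_AS psi"
proof -
  obtain K p phi where v: "v = (\<Sum>k<K. p k * E2 (phi k))" and pd: "pure_decomp psi K p phi"
    using assms unfolding decomp_values_def by blast
  have "schmidt_min (\<lambda>j i. phi k i j) = schmidt_min (phi k)" for k
    by (rule schmidt_min_transpose)
  hence "v = 2 * (\<Sum>k<K. p k * schmidt_min (\<lambda>j i. phi k i j))"
    unfolding v E2_eq_schmidt_min sum_distrib_left by (simp add: mult.left_commute)
  moreover have "(\<Sum>k<K. p k * schmidt_min (\<lambda>j i. phi k i j)) \<le> eig_min (rhoB psi)"
    unfolding rhoB_pure_decomp[OF pd]
    by (rule weighted_schmidt_min_le_eig_min) (use pd in \<open>simp add: pure_decomp_def\<close>)
  ultimately show ?thesis unfolding E_B_AS_def by simp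
qed

section \<open>Measuring S\<close>

(* The unnormalised state of AB left when S is measured in the basis e with outcome l. *)
definition branch :: "(2 \<Rightarrow> 2 \<Rightarrow> 'n::finite \<Rightarrow> complex) \<Rightarrow> ('n \<Rightarrow> 'n \<Rightarrow> complex) \<Rightarrow> 'n \<Rightarrow> 2 \<Rightarrow> 2 \<Rightarrow> complex" where
  "branch psi e l a b = cinner (e l) (psi a b)"

lemma sum_branch_rhoAB:
  assumes "orthonormal_basis e"
  shows "(\<Sum>l\<in>UNIV. branch psi e l a b * cnj (branch psi e l a' b')) = rhoAB psi (a, b) (a', b')"
  unfolding branch_def rhoAB_def orthonormal_basis_parseval[OF assms] by simp

lemma Amat_eq_prod_basis_coeffs: "Amat psi eA eB eS l = prod_basis_coeffs eA eB (branch psi eS l)"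
  unfolding Amat_def prod_basis_coeffs_def branch_def cinner_def
  by (intro ext) (simp add: sum_distrib_left mult.assoc)

lemma branches_decomp_value:
  fixes psi :: "2 \<Rightarrow> 2 \<Rightarrow> 'n::finite \<Rightarrow> complex"
  assumes "normalized3 psi" and "orthonormal_basis e"
  shows "2 * (\<Sum>l\<in>UNIV. schmidt_min (branch psi e l)) \<in> decomp_values psi"
proof -
  define V where "V = branch psi e"
  have "\<forall>l. \<exists>phi. normalized2 phi \<and> (\<forall>a b. V l a b = of_real (sqrt (frob_sq (V l))) * phi a b)"
    by (metis exists_normalized2_multiple)
  then obtain Phi where Phi: "\<And>l. normalized2 (Phi l)"
      "\<And>l a b. V l a b = of_real (sqrt (frob_sq (V l))) * Phi l a b"
    by metis
  define K where "K = CARD('n)"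
  obtain g where g: "bij_betw g {..<K} (UNIV :: 'n set)"
    using ex_bij_betw_nat_finite[of "UNIV :: 'n set"] by (auto simp: K_def lessThan_atLeast0)
  have reindex: "(\<Sum>k<K. G (g k)) = (\<Sum>l\<in>UNIV. G l)" for G :: "'n \<Rightarrow> 'a::comm_monoid_add"
    by (rule sum.reindex_bij_betw[OF g])
  define p where "p k = frob_sq (V (g k))" for k
  define phi where "phi k = Phi (g k)" for k
  have p_nonneg: "p k \<ge> 0" for k
    unfolding p_def frob_sq_eq_sqnorm by (rule sqnorm_nonneg)
  have V: "V (g k) = (\<lambda>a b. of_real (sqrt (p k)) * phi k a b)" for k
    using Phi(2)[of "g k"] unfolding p_def phi_def by blast
  have weighted_proj: "of_real (p k) * phi k a b * cnj (phi k a' b') = V (g k) a b * cnj (V (g k) a' b')"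
    for k a b a' b'
  proof -
    have "V (g k) a b * cnj (V (g k) a' b')
        = of_real (sqrt (p k)) * of_real (sqrt (p k)) * (phi k a b * cnj (phi k a' b'))"
      unfolding V by (simp add: mult_ac)
    also have "of_real (sqrt (p k)) * of_real (sqrt (p k)) = (of_real (p k) :: complex)"
      using p_nonneg[of k] by (simp flip: of_real_mult)
    finally show ?thesis by (simp add: mult.assoc)
  qed
  have "(\<Sum>k<K. of_real (p k)) = (\<Sum>l\<in>UNIV. \<Sum>a\<in>UNIV. \<Sum>b\<in>UNIV. V l a b * cnj (V l a b))"
    unfolding p_def of_real_frob_sq by (rule reindex)
  also have "\<dots> = (\<Sum>a\<in>UNIV. \<Sum>b\<in>UNIV. rhoAB psi (a, b) (a, b))"
    unfolding V_def sum_branch_rhoAB[OF assms(2), symmetric] sum_UNIV_two by (simp add: sum.distrib)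
  also have "\<dots> = of_real (\<Sum>a\<in>UNIV. \<Sum>b\<in>UNIV. \<Sum>c\<in>UNIV. (cmod (psi a b c))\<^sup>2)"
    unfolding rhoAB_def of_real_sum complex_norm_square by simp
  also have "\<dots> = 1" using assms(1) unfolding normalized3_def by simp
  finally have "of_real (\<Sum>k<K. p k) = (1 :: complex)" unfolding of_real_sum .
  hence "(\<Sum>k<K. p k) = 1" by (rule of_real_eq_1_iff[THEN iffD1])
  moreover have "rhoAB psi x y
      = (\<Sum>k<K. of_real (p k) * phi k (fst x) (snd x) * cnj (phi k (fst y) (snd y)))" for x y
    unfolding weighted_proj reindex[of "\<lambda>l. V l (fst x) (snd x) * cnj (V l (fst y) (snd y))"]
    unfolding V_def sum_branch_rhoAB[OF assms(2)] by simp
  ultimately have "pure_decomp psi K p phi"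
    unfolding pure_decomp_def using p_nonneg Phi(1) by (simp add: phi_def)
  moreover have "p k * E2 (phi k) = 2 * schmidt_min (V (g k))" for k
    unfolding V schmidt_min_scale E2_eq_schmidt_min using p_nonneg[of k] by simp
  hence "(\<Sum>k<K. p k * E2 (phi k)) = 2 * (\<Sum>l\<in>UNIV. schmidt_min (branch psi e l))"
    unfolding V_def sum_distrib_left reindex[of "\<lambda>l. 2 * schmidt_min (branch psi e l)", symmetric]
    by simp
  ultimately show ?thesis
    unfolding decomp_values_def mem_Collect_eq by (intro exI[of _ K] exI[of _ p] exI[of _ phi]) simp
qed

lemma Amat_decomp_value:
  fixes psi :: "2 \<Rightarrow> 2 \<Rightarrow> 'n::finite \<Rightarrow> complex"
  assumes "normalized3 psi" "orthonormal_basis eA" "orthonormal_basis eB" "orthonormal_basis eS"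
  shows "2 * (\<Sum>l\<in>UNIV. schmidt_min (Amat psi eA eB eS l)) \<in> decomp_values psi"
  using branches_decomp_value[OF assms(1,4)]
  unfolding Amat_eq_prod_basis_coeffs schmidt_min_prod_basis_coeffs[OF assms(2,3)] .

lemma col_gram_decomp_value:
  fixes psi :: "2 \<Rightarrow> 2 \<Rightarrow> 'n::finite \<Rightarrow> complex"
  assumes "normalized3 psi" "orthonormal_basis eA" "orthonormal_basis eB" "orthonormal_basis eS"
    and "\<forall>l j j'. (\<Sum>i\<in>UNIV. cnj (Amat psi eA eB eS l i j) * Amat psi eA eB eS l i j')
                   = (if j = j' then of_real (q j l) else 0)"
    and "\<forall>l. q 1 l \<le> q 0 l"
  shows "2 * (\<Sum>l\<in>UNIV. q 1 l) \<in> decomp_values psi"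
proof -
  have "schmidt_min (Amat psi eA eB eS l) = q 1 l" for l
    using assms(5,6) by (intro schmidt_min_of_col_gram[of _ "\<lambda>j. q j l"]) auto
  with Amat_decomp_value[OF assms(1-4)] show ?thesis by simp
qed

lemma row_gram_decomp_value:
  fixes psi :: "2 \<Rightarrow> 2 \<Rightarrow> 'n::finite \<Rightarrow> complex"
  assumes "normalized3 psi" "orthonormal_basis eA" "orthonormal_basis eB" "orthonormal_basis eS"
    and "\<forall>l i i'. (\<Sum>j\<in>UNIV. Amat psi eA eB eS l i j * cnj (Amat psi eA eB eS l i' j))
                   = (if i = i' then of_real (p i l) else 0)"
    and "\<forall>l. p 1 l \<le> p 0 l"
  shows "2 * (\<Sum>l\<in>UNIV. p 1 l) \<in> decomp_values psi"
proof -
  have "schmidt_min (Amat psi eA eB eS l) = p 1 l" for l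
    using assms(5,6) by (intro schmidt_min_of_row_gram[of _ "\<lambda>i. p i l"]) auto
  with Amat_decomp_value[OF assms(1-4)] show ?thesis by simp
qed

theorem theorem6:
  fixes psi :: "2 \<Rightarrow> 2 \<Rightarrow> 'n::finite \<Rightarrow> complex"
  assumes "CARD('n) \<ge> 2"
    and "normalized3 psi"
    and "class_A psi"
  shows "min (E_A_BS psi) (E_B_AS psi) \<in> decomp_values psi \<and>
         (\<forall>v\<in>decomp_values psi. v \<le> min (E_A_BS psi) (E_B_AS psi))"
proof
  show "\<forall>v\<in>decomp_values psi. v \<le> min (E_A_BS psi) (E_B_AS psi)"
    by (auto intro: decomp_value_le_E_A_BS decomp_value_le_E_B_AS)
  show "min (E_A_BS psi) (E_B_AS psi) \<in> decomp_values psi"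
    using assms(3) unfolding class_A_def
    by (auto simp: min_absorb1 min_absorb2 E_A_BS_def E_B_AS_def
        dest: col_gram_decomp_value[OF assms(2)] row_gram_decomp_value[OF assms(2)])
qed

end
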